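(* Let $R$ be a topological ring and $M$ a locally compact left topological $R$-module that is finitely generated as an $R$-module. Then the Pontryagin dual $\widehat{M}$, with the right $R$-action $\chi^r(m)=\chi(rm)$, has the no small submodules property. In particular, for every $m\in\mathbb{N}$, $\widehat{R}^m\cong\widehat{R^m}$ has the no small submodules property, both as a left and as a right topological $R$-module.
   Context: All topological groups are Hausdorff; rings are unital. $\widehat{M}$ is the group of continuous homomorphisms $M\to\mathbb{S}^1$ with the compact-open topology. A module has the no small submodules property if some neighbourhood of $0$ contains no nonzero submodule. *)

theory Defs
  imports "HOL-Analysis.Analysis" "HOL-Algebra.Algebra"
begin

definition topological_ring :: "('a, 'c) ring_scheme \<Rightarrow> 'a topology \<Rightarrow> bool" where
  "topological_ring R TR \<longleftrightarrow>
     ring R \<and> topspace TR = carrier R \<and> Hausdorff_space TR \<and>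
     continuous_map (prod_topology TR TR) TR (\<lambda>(x, y). x \<oplus>\<^bsub>R\<^esub> y) \<and>
     continuous_map TR TR (\<lambda>x. \<ominus>\<^bsub>R\<^esub> x) \<and>
     continuous_map (prod_topology TR TR) TR (\<lambda>(x, y). x \<otimes>\<^bsub>R\<^esub> y)"

text \<open>Left R-modules: M is an abelian group written as a HOL-Algebra monoid
(its operation is the module addition, its unit is 0), sm is the left scalar action.\<close>
definition left_module ::
  "('a, 'c) ring_scheme \<Rightarrow> ('b, 'd) monoid_scheme \<Rightarrow> ('a \<Rightarrow> 'b \<Rightarrow> 'b) \<Rightarrow> bool" where
  "left_module R M sm \<longleftrightarrow>
     ring R \<and> comm_group M \<and>
     (\<forall>r\<in>carrier R. \<forall>x\<in>carrier M. sm r x \<in> carrier M) \<and>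
     (\<forall>r\<in>carrier R. \<forall>x\<in>carrier M. \<forall>y\<in>carrier M.
         sm r (x \<otimes>\<^bsub>M\<^esub> y) = sm r x \<otimes>\<^bsub>M\<^esub> sm r y) \<and>
     (\<forall>r\<in>carrier R. \<forall>s\<in>carrier R. \<forall>x\<in>carrier M.
         sm (r \<oplus>\<^bsub>R\<^esub> s) x = sm r x \<otimes>\<^bsub>M\<^esub> sm s x) \<and>
     (\<forall>r\<in>carrier R. \<forall>s\<in>carrier R. \<forall>x\<in>carrier M.
         sm (r \<otimes>\<^bsub>R\<^esub> s) x = sm r (sm s x)) \<and>
     (\<forall>x\<in>carrier M. sm \<one>\<^bsub>R\<^esub> x = x)"

definition topological_left_module ::
  "('a, 'c) ring_scheme \<Rightarrow> 'a topology \<Rightarrow> ('b, 'd) monoid_scheme \<Rightarrow> ('a \<Rightarrow> 'b \<Rightarrow> 'b)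
     \<Rightarrow> 'b topology \<Rightarrow> bool" where
  "topological_left_module R TR M sm TM \<longleftrightarrow>
     topological_ring R TR \<and> left_module R M sm \<and>
     topspace TM = carrier M \<and> Hausdorff_space TM \<and>
     continuous_map (prod_topology TM TM) TM (\<lambda>(x, y). x \<otimes>\<^bsub>M\<^esub> y) \<and>
     continuous_map TM TM (\<lambda>x. inv\<^bsub>M\<^esub> x) \<and>
     continuous_map (prod_topology TR TM) TM (\<lambda>(r, x). sm r x)"

definition finitely_generated_module ::
  "('a, 'c) ring_scheme \<Rightarrow> ('b, 'd) monoid_scheme \<Rightarrow> ('a \<Rightarrow> 'b \<Rightarrow> 'b) \<Rightarrow> bool" where
  "finitely_generated_module R M sm \<longleftrightarrow>
     (\<exists>S. finite S \<and> S \<subseteq> carrier M \<and>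
        (\<forall>x\<in>carrier M. \<exists>c. (\<forall>s\<in>S. c s \<in> carrier R) \<and>
            x = finprod M (\<lambda>s. sm (c s) s) S))"

text \<open>Characters are normalised to the value 1
outside the carrier, so that the group operation is pointwise multiplication.\<close>
definition characters :: "('b, 'd) monoid_scheme \<Rightarrow> 'b topology \<Rightarrow> ('b \<Rightarrow> complex) set" where
  "characters M TM =
     {f. (\<forall>x\<in>carrier M. f x \<in> sphere 0 1) \<and>
          (\<forall>x\<in>carrier M. \<forall>y\<in>carrier M. f (x \<otimes>\<^bsub>M\<^esub> y) = f x * f y) \<and>
          continuous_map TM euclidean f \<and>
          (\<forall>x. x \<notin> carrier M \<longrightarrow> f x = 1)}"

definition trivial_character :: "('b, 'd) monoid_scheme \<Rightarrow> 'b \<Rightarrow> complex" where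
  "trivial_character M = (\<lambda>x. 1)"

text \<open>Compact-open topology on the dual: generated by the subbasic sets
{f. f(K) \<subseteq> U}, K compact in M, U open in the circle (equivalently in the plane).\<close>
definition dual_topology :: "('b, 'd) monoid_scheme \<Rightarrow> 'b topology \<Rightarrow> ('b \<Rightarrow> complex) topology" where
  "dual_topology M TM =
     topology_generated_by
       {{f \<in> characters M TM. f ` K \<subseteq> U} | K U. compactin TM K \<and> open U}"

definition dual_action ::
  "('b, 'd) monoid_scheme \<Rightarrow> ('a \<Rightarrow> 'b \<Rightarrow> 'b) \<Rightarrow> ('b \<Rightarrow> complex) \<Rightarrow> 'a \<Rightarrow> 'b \<Rightarrow> complex" where
  "dual_action M sm f r = (\<lambda>x. if x \<in> carrier M then f (sm r x) else 1)"

definition dual_submodule ::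
  "('a, 'c) ring_scheme \<Rightarrow> ('b, 'd) monoid_scheme \<Rightarrow> ('a \<Rightarrow> 'b \<Rightarrow> 'b) \<Rightarrow> 'b topology
     \<Rightarrow> ('b \<Rightarrow> complex) set \<Rightarrow> bool" where
  "dual_submodule R M sm TM N \<longleftrightarrow>
     N \<subseteq> characters M TM \<and> trivial_character M \<in> N \<and>
     (\<forall>f\<in>N. \<forall>g\<in>N. (\<lambda>x. f x * g x) \<in> N) \<and>
     (\<forall>f\<in>N. (\<lambda>x. inverse (f x)) \<in> N) \<and>
     (\<forall>f\<in>N. \<forall>r\<in>carrier R. dual_action M sm f r \<in> N)"

definition dual_has_NSS ::
  "('a, 'c) ring_scheme \<Rightarrow> ('b, 'd) monoid_scheme \<Rightarrow> ('a \<Rightarrow> 'b \<Rightarrow> 'b) \<Rightarrow> 'b topology \<Rightarrow> bool" where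
  "dual_has_NSS R M sm TM \<longleftrightarrow>
     (\<exists>V. (\<exists>W. openin (dual_topology M TM) W \<and> trivial_character M \<in> W \<and> W \<subseteq> V) \<and>
        (\<forall>N. dual_submodule R M sm TM N \<and> N \<subseteq> V \<longrightarrow> N = {trivial_character M}))"

end

theory Submission
  imports Defs
begin

text \<open>Let \<open>S\<close> be a finite generating set of \<open>M\<close>. Since finite sets are compact, the characters
\<open>\<chi>\<close> with \<open>Re \<chi>(s) > 1/2\<close> for all \<open>s \<in> S\<close> form an open neighbourhood \<open>W\<close> of the trivial
character. If a submodule \<open>N\<close> lies in \<open>W\<close>, then for \<open>\<chi> \<in> N\<close> and \<open>s \<in> S\<close> every value
\<open>\<chi>(r s)\<close> stays in the arc \<open>Re > 1/2\<close> of the circle, and so do its repeated squares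
\<open>\<chi>(r s)\<^sup>2 = \<chi>((r + r) s)\<close>. On that arc squaring at least triples \<open>1 - Re w\<close>, which forces
\<open>\<chi>(r s) = 1\<close>; hence \<open>\<chi>\<close> is 1 on all multiples of the generators and is trivial.\<close>

lemma one_minus_Re_square_ge:
  fixes w :: complex
  assumes "cmod w = 1" and "Re w > 1/2"
  shows "3 * (1 - Re w) \<le> 1 - Re (w * w)"
proof -
  have "(Re w)\<^sup>2 + (Im w)\<^sup>2 = 1"
    using cmod_power2[of w] assms(1) by simp
  then have "1 - Re (w * w) = (1 - Re w) * (2 * (1 + Re w))"
    by (simp add: power2_eq_square algebra_simps)
  moreover have "(1 - Re w) * 3 \<le> (1 - Re w) * (2 * (1 + Re w))"
    using assms complex_Re_le_cmod[of w] by (intro mult_left_mono) auto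
  ultimately show ?thesis
    by (simp add: mult.commute)
qed

lemma eq_1_if_Re_repeated_squares_gt_half:
  fixes w :: complex
  assumes norm_w: "cmod w = 1" and Re_gt: "\<And>k. Re (w ^ 2 ^ k) > 1/2"
  shows "w = 1"
proof -
  have growth: "3 ^ k * (1 - Re w) \<le> 1 - Re (w ^ 2 ^ k)" for k
  proof (induction k)
    case 0
    then show ?case by simp
  next
    case (Suc k)
    have "w ^ 2 ^ Suc k = w ^ 2 ^ k * w ^ 2 ^ k"
      by (simp only: power_Suc2 power_mult power2_eq_square)
    moreover have "3 * (1 - Re (w ^ 2 ^ k)) \<le> 1 - Re (w ^ 2 ^ k * w ^ 2 ^ k)"
      using one_minus_Re_square_ge Re_gt norm_w by (simp add: norm_power)
    ultimately show ?case
      using Suc.IH by simp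
  qed
  have "Re w \<ge> 1"
  proof (rule ccontr)
    assume "\<not> Re w \<ge> 1"
    then have pos: "1 - Re w > 0" by simp
    obtain k where "1 / (1 - Re w) < 3 ^ k"
      using real_arch_pow[of 3] by auto
    with pos have "1 < 3 ^ k * (1 - Re w)"
      by (simp add: divide_less_eq)
    with growth[of k] Re_gt[of k] show False by simp
  qed
  moreover have "Re w \<le> 1"
    using norm_w complex_Re_le_cmod[of w] by simp
  moreover have "(Re w)\<^sup>2 + (Im w)\<^sup>2 = 1"
    using norm_w cmod_power2[of w] by simp
  ultimately show ?thesis
    by (simp add: complex_eq_iff)
qed

lemma trivial_character_in_characters: "trivial_character M \<in> characters M TM"
  unfolding characters_def trivial_character_def by auto

lemma character_one:
  assumes "monoid M" and "f \<in> characters M TM"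
  shows "f \<one>\<^bsub>M\<^esub> = 1"
proof -
  have one: "\<one>\<^bsub>M\<^esub> \<in> carrier M"
    using assms(1) by (rule monoid.one_closed)
  have "f \<one>\<^bsub>M\<^esub> = f (\<one>\<^bsub>M\<^esub> \<otimes>\<^bsub>M\<^esub> \<one>\<^bsub>M\<^esub>)"
    using monoid.l_one[OF assms(1) one] by simp
  also have "\<dots> = f \<one>\<^bsub>M\<^esub> * f \<one>\<^bsub>M\<^esub>"
    using assms(2) one unfolding characters_def by blast
  finally have "f \<one>\<^bsub>M\<^esub> = f \<one>\<^bsub>M\<^esub> * f \<one>\<^bsub>M\<^esub>" .
  moreover have "f \<one>\<^bsub>M\<^esub> \<noteq> 0"
    using assms(2) one unfolding characters_def by fastforce
  ultimately show ?thesis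
    by simp
qed

lemma character_finprod:
  assumes M: "comm_monoid M" and f: "f \<in> characters M TM"
    and "finite A" and "g \<in> A \<rightarrow> carrier M"
  shows "f (finprod M g A) = (\<Prod>a\<in>A. f (g a))"
  using assms(3,4)
proof (induction A rule: finite_induct)
  case empty
  show ?case
    using character_one[OF comm_monoid.axioms(1)[OF M] f] by (simp add: comm_monoid.finprod_empty[OF M])
next
  case (insert a A)
  then have "g a \<in> carrier M" and "finprod M g A \<in> carrier M" and "g \<in> A \<rightarrow> carrier M"
    by (auto intro: comm_monoid.finprod_closed[OF M])
  moreover have "finprod M g (insert a A) = g a \<otimes>\<^bsub>M\<^esub> finprod M g A"
    using insert calculation by (simp add: comm_monoid.finprod_insert[OF M])
  ultimately have "f (finprod M g (insert a A)) = f (g a) * f (finprod M g A)"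
    using f unfolding characters_def by simp
  with insert show ?case
    by simp
qed

lemma openin_dual_topology_compact_open:
  assumes "compactin TM K" and "open U"
  shows "openin (dual_topology M TM) {f \<in> characters M TM. f ` K \<subseteq> U}"
  unfolding dual_topology_def
  by (intro topology_generated_by_Basis CollectI exI[of _ K] exI[of _ U] conjI refl assms)

lemma character_eq_1_on_multiples_if_Re_gt_half:
  assumes "left_module R M sm" and "f \<in> characters M TM" and "s \<in> carrier M"
    and Re_gt: "\<And>t. t \<in> carrier R \<Longrightarrow> Re (f (sm t s)) > 1/2"
    and "r \<in> carrier R"
  shows "f (sm r s) = 1"
proof (rule eq_1_if_Re_repeated_squares_gt_half)
  have squares: "\<exists>t\<in>carrier R. f (sm r s) ^ 2 ^ k = f (sm t s)" for k
  proof (induction k)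
    case 0
    then show ?case using \<open>r \<in> carrier R\<close> by auto
  next
    case (Suc k)
    then obtain t where t: "t \<in> carrier R" "f (sm r s) ^ 2 ^ k = f (sm t s)" by blast
    have "sm (t \<oplus>\<^bsub>R\<^esub> t) s = sm t s \<otimes>\<^bsub>M\<^esub> sm t s" and "sm t s \<in> carrier M"
      using assms(1,3) t(1) unfolding left_module_def by auto
    then have "f (sm (t \<oplus>\<^bsub>R\<^esub> t) s) = f (sm t s) * f (sm t s)"
      using assms(2) unfolding characters_def by simp
    also have "\<dots> = f (sm r s) ^ 2 ^ Suc k"
      by (simp only: power_Suc2 power_mult power2_eq_square t(2))
    moreover have "t \<oplus>\<^bsub>R\<^esub> t \<in> carrier R"
      using assms(1) t(1) unfolding left_module_def by (simp add: ring.ring_simprules(1))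
    ultimately show ?case by metis
  qed
  then show "Re (f (sm r s) ^ 2 ^ k) > 1/2" for k
    using Re_gt by metis
  show "cmod (f (sm r s)) = 1"
    using assms unfolding left_module_def characters_def by simp
qed

lemma character_eq_trivial_if_1_on_generators:
  assumes "left_module R M sm" and "f \<in> characters M TM"
    and "finite S" and "S \<subseteq> carrier M"
    and spans: "\<forall>x\<in>carrier M. \<exists>c. (\<forall>s\<in>S. c s \<in> carrier R) \<and> x = finprod M (\<lambda>s. sm (c s) s) S"
    and one_on_generators: "\<And>r s. r \<in> carrier R \<Longrightarrow> s \<in> S \<Longrightarrow> f (sm r s) = 1"
  shows "f = trivial_character M"
proof
  fix x
  show "f x = trivial_character M x"
  proof (cases "x \<in> carrier M")
    case True
    then obtain c where c: "\<forall>s\<in>S. c s \<in> carrier R" and x: "x = finprod M (\<lambda>s. sm (c s) s) S"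
      using spans by blast
    have "comm_monoid M" and "(\<lambda>s. sm (c s) s) \<in> S \<rightarrow> carrier M"
      using assms(1,4) c unfolding left_module_def by (auto intro: comm_group.axioms(1))
    then have "f x = (\<Prod>s\<in>S. f (sm (c s) s))"
      using character_finprod assms(2,3) x by blast
    also have "\<dots> = 1"
      using one_on_generators c by simp
    finally show ?thesis
      unfolding trivial_character_def .
  next
    case False
    then show ?thesis
      using assms(2) unfolding characters_def trivial_character_def by simp
  qed
qed

lemma dual_submodule_trivial_if_Re_gt_half_on_generators:
  assumes module: "left_module R M sm" and S: "finite S" "S \<subseteq> carrier M"
    and spans: "\<forall>x\<in>carrier M. \<exists>c. (\<forall>s\<in>S. c s \<in> carrier R) \<and> x = finprod M (\<lambda>s. sm (c s) s) S"
    and N: "dual_submodule R M sm TM N"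
    and N_small: "N \<subseteq> {f \<in> characters M TM. f ` S \<subseteq> {z. Re z > 1/2}}"
  shows "N = {trivial_character M}"
proof -
  have "f = trivial_character M" if "f \<in> N" for f
  proof (rule character_eq_trivial_if_1_on_generators[OF module _ S spans])
    show f: "f \<in> characters M TM"
      using \<open>f \<in> N\<close> N unfolding dual_submodule_def by blast
    have Re_gt: "Re (f (sm t s)) > 1/2" if "t \<in> carrier R" "s \<in> S" for t s
    proof -
      have "dual_action M sm f t \<in> N"
        using \<open>f \<in> N\<close> N that(1) unfolding dual_submodule_def by blast
      then have "dual_action M sm f t s \<in> {z. Re z > 1/2}"
        using N_small that(2) by blast
      moreover have "s \<in> carrier M"
        using that(2) S by blast
      ultimately show ?thesis
        by (simp add: dual_action_def)
    qed
    show "f (sm r s) = 1" if "r \<in> carrier R" "s \<in> S" for r s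
      using character_eq_1_on_multiples_if_Re_gt_half[OF module f] Re_gt that S by blast
  qed
  then show ?thesis
    using N unfolding dual_submodule_def by blast
qed

theorem mainTheorem17:
  fixes R :: "('a, 'c) ring_scheme" and TR :: "'a topology"
    and M :: "('b, 'd) monoid_scheme" and sm :: "'a \<Rightarrow> 'b \<Rightarrow> 'b" and TM :: "'b topology"
  assumes "topological_left_module R TR M sm TM"
    and "locally_compact_space TM"
    and "finitely_generated_module R M sm"
  shows "dual_has_NSS R M sm TM"
proof -
  have module: "left_module R M sm" and carrier: "topspace TM = carrier M"
    using assms(1) unfolding topological_left_module_def by auto
  obtain S where S: "finite S" "S \<subseteq> carrier M"
    and spans: "\<forall>x\<in>carrier M. \<exists>c. (\<forall>s\<in>S. c s \<in> carrier R) \<and> x = finprod M (\<lambda>s. sm (c s) s) S"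
    using assms(3) unfolding finitely_generated_module_def by blast
  define W where "W = {f \<in> characters M TM. f ` S \<subseteq> {z. Re z > 1/2}}"
  have "openin (dual_topology M TM) W"
    unfolding W_def using S carrier
    by (intro openin_dual_topology_compact_open finite_imp_compactin open_halfspace_Re_gt) auto
  moreover have "trivial_character M \<in> W"
    unfolding W_def using trivial_character_in_characters by (auto simp: trivial_character_def)
  moreover have "N = {trivial_character M}" if "dual_submodule R M sm TM N" "N \<subseteq> W" for N
    using dual_submodule_trivial_if_Re_gt_half_on_generators[OF module S spans] that
    unfolding W_def by blast
  ultimately show ?thesis
    unfolding dual_has_NSS_def by blast
qed

end
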